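(* Let $\mathcal{F}$ be a space of functions on $\mathbb{R}$, closed under translations, with a translation-invariant norm $\|\cdot\|$. Suppose that $S_N$ admits the weak global Edgeworth expansion of order $0$ on $\mathcal{F}$ with leading polynomial $P_{0,g}\equiv 1$ and asymptotic mean $A=0$, i.e. $\mathbb{E}(g(S_N))=\int\mathfrak{n}(z)g(z\sqrt{N})\,dz+\|g\|\,o(N^{-1/2})$ for all $g\in\mathcal{F}$, with the $o$-term independent of $g$. Let $f\in\mathcal{F}$ be integrable with $|xf(x)|$ integrable. Then $$\sqrt{N}\,\mathbb{E}(f(S_N-u))=\frac{1}{\sqrt{2\pi\sigma^2}}e^{-\frac{u^2}{2N\sigma^2}}\int f(x)\,dx+o(1)$$ uniformly for $u\in\mathbb{R}$.
   Context: $X_1,X_2,\dots$ are real random variables, $S_N=\sum_{n=1}^N X_n$, $\sigma^2>0$ and $\mathfrak{n}(y)=\frac{1}{\sqrt{2\pi\sigma^2}}e^{-y^2/(2\sigma^2)}$. In this subsection the paper assumes the asymptotic mean $A=\lim_{N\to\infty}\mathbb{E}(S_N/N)$ equals $0$. *)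

theory Defs
  imports "HOL-Probability.Probability"
begin

definition ndens :: "real \<Rightarrow> real \<Rightarrow> real" where
  "ndens \<sigma> y = 1 / sqrt (2 * pi * \<sigma>\<^sup>2) * exp (- y\<^sup>2 / (2 * \<sigma>\<^sup>2))"

definition psum :: "(nat \<Rightarrow> 'a \<Rightarrow> real) \<Rightarrow> nat \<Rightarrow> 'a \<Rightarrow> real" where
  "psum X N \<omega> = (\<Sum>n = 1..N. X n \<omega>)"

end

theory Submission
  imports Defs
begin

text \<open>Apply the expansion to the translate \<open>f (x - u)\<close>, which lies in F and has the same norm:
after multiplying by \<open>sqrt N\<close> the error is \<open>nrm f * o(1)\<close>, uniformly in \<open>u\<close>. The substitution
\<open>x = z sqrt N - u\<close> turns the Gaussian term into \<open>\<integral> ndens ((x + u) / sqrt N) f x dx\<close>, and since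
\<open>ndens\<close> is Lipschitz with constant \<open>1 / (sqrt (2 pi) \<sigma>\<^sup>2)\<close>, replacing \<open>ndens ((x + u) / sqrt N)\<close>
by \<open>ndens (u / sqrt N)\<close> costs at most that constant times \<open>\<integral> \<bar>x f x\<bar> dx / sqrt N\<close>.\<close>

lemma has_real_derivative_ndens:
  "(\<sigma>::real) \<noteq> 0 \<Longrightarrow> (ndens \<sigma> has_real_derivative ndens \<sigma> y * (- y / \<sigma>\<^sup>2)) (at y)"
  unfolding ndens_def
  by (auto intro!: derivative_eq_intros simp: field_simps power2_eq_square)

lemma abs_le_exp_gaussian_exponent:
  assumes "(\<sigma>::real) > 0"
  shows "\<bar>y\<bar> \<le> \<sigma> * exp (y\<^sup>2 / (2 * \<sigma>\<^sup>2))"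
proof -
  have "2 * \<sigma> * \<bar>y\<bar> \<le> 2 * \<sigma>\<^sup>2 + y\<^sup>2"
    using sum_squares_bound[of \<sigma> "\<bar>y\<bar>"] zero_le_power2[of \<sigma>] power2_abs[of y] by linarith
  then have "\<bar>y\<bar> \<le> (2 * \<sigma>\<^sup>2 + y\<^sup>2) / (2 * \<sigma>)"
    using assms by (simp add: pos_le_divide_eq mult.commute)
  also have "\<dots> = \<sigma> * (1 + y\<^sup>2 / (2 * \<sigma>\<^sup>2))"
    using assms by (simp add: field_simps power2_eq_square)
  also have "\<dots> \<le> \<sigma> * exp (y\<^sup>2 / (2 * \<sigma>\<^sup>2))"
    using assms exp_ge_add_one_self by (intro mult_left_mono) auto
  finally show ?thesis .
qed

lemma abs_ndens_deriv_le:
  assumes "(\<sigma>::real) > 0"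
  shows "\<bar>ndens \<sigma> y * (- y / \<sigma>\<^sup>2)\<bar> \<le> 1 / sqrt (2 * pi * \<sigma>\<^sup>2) / \<sigma>"
proof -
  define t where "t = y\<^sup>2 / (2 * \<sigma>\<^sup>2)"
  have "\<bar>ndens \<sigma> y * (- y / \<sigma>\<^sup>2)\<bar> = 1 / sqrt (2 * pi * \<sigma>\<^sup>2) * exp (- t) * \<bar>y\<bar> / \<sigma>\<^sup>2"
    unfolding ndens_def t_def using assms by (simp add: abs_mult abs_divide)
  also have "\<dots> \<le> 1 / sqrt (2 * pi * \<sigma>\<^sup>2) * exp (- t) * (\<sigma> * exp t) / \<sigma>\<^sup>2"
    using abs_le_exp_gaussian_exponent[OF assms, of y] assms
    by (intro divide_right_mono mult_left_mono) (auto simp: t_def)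
  also have "\<dots> = 1 / sqrt (2 * pi * \<sigma>\<^sup>2) / \<sigma>"
    using assms by (simp add: exp_minus field_simps power2_eq_square)
  finally show ?thesis .
qed

lemma ndens_lipschitz:
  assumes "(\<sigma>::real) > 0"
  shows "\<bar>ndens \<sigma> a - ndens \<sigma> b\<bar> \<le> 1 / sqrt (2 * pi * \<sigma>\<^sup>2) / \<sigma> * \<bar>a - b\<bar>"
  using field_differentiable_bound[of UNIV "ndens \<sigma>" "\<lambda>y. ndens \<sigma> y * (- y / \<sigma>\<^sup>2)"]
    has_real_derivative_ndens abs_ndens_deriv_le assms
  by (metis UNIV_I convex_UNIV less_irrefl real_norm_def)

lemma ndens_at_scaled_point:
  assumes "N > 0"
  shows "ndens \<sigma> (u / sqrt (real N)) = 1 / sqrt (2 * pi * \<sigma>\<^sup>2) * exp (- u\<^sup>2 / (2 * real N * \<sigma>\<^sup>2))"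
  using assms by (simp add: ndens_def power_divide)

lemma integral_ndens_rescale:
  fixes s :: real assumes "s > 0"
  shows "s * (\<integral>z. ndens \<sigma> z * f (z * s - u) \<partial>lborel) = (\<integral>x. ndens \<sigma> ((x + u) / s) * f x \<partial>lborel)"
proof -
  have "(\<integral>x. ndens \<sigma> ((x + u) / s) * f x \<partial>lborel)
      = \<bar>s\<bar> *\<^sub>R (\<integral>z. ndens \<sigma> ((- u + s * z + u) / s) * f (- u + s * z) \<partial>lborel)"
    using assms by (intro lborel_integral_real_affine) simp
  also have "(\<lambda>z. ndens \<sigma> ((- u + s * z + u) / s) * f (- u + s * z)) = (\<lambda>z. ndens \<sigma> z * f (z * s - u))"
    using assms by (auto simp: field_simps)
  finally show ?thesis using assms by simp
qed

lemma integral_ndens_dilate_approx: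
  fixes s :: real
  assumes "\<sigma> > 0" "s > 0" and f_int: "integrable lborel f"
    and xf_int: "integrable lborel (\<lambda>x. x * f x)"
  shows "\<bar>(\<integral>x. ndens \<sigma> ((x + u) / s) * f x \<partial>lborel) - ndens \<sigma> (u / s) * (\<integral>x. f x \<partial>lborel)\<bar>
    \<le> 1 / sqrt (2 * pi * \<sigma>\<^sup>2) / \<sigma> * (\<integral>x. \<bar>x * f x\<bar> \<partial>lborel) / s"
proof -
  define L where "L = 1 / sqrt (2 * pi * \<sigma>\<^sup>2) / \<sigma>"
  define D where "D x = (ndens \<sigma> ((x + u) / s) - ndens \<sigma> (u / s)) * f x" for x
  have [measurable]: "f \<in> borel_measurable borel"
    using f_int by (simp add: borel_measurable_integrable)
  have D_le: "\<bar>D x\<bar> \<le> L / s * \<bar>x * f x\<bar>" for x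
  proof -
    have "\<bar>D x\<bar> \<le> L * \<bar>(x + u) / s - u / s\<bar> * \<bar>f x\<bar>"
      unfolding D_def abs_mult L_def by (intro mult_right_mono ndens_lipschitz assms) auto
    also have "\<dots> = L / s * \<bar>x * f x\<bar>"
      using assms by (simp add: add_divide_distrib abs_divide abs_mult)
    finally show ?thesis .
  qed
  have bound_int: "integrable lborel (\<lambda>x. L / s * \<bar>x * f x\<bar>)"
    using xf_int by (intro integrable_mult_right integrable_abs)
  have [measurable]: "D \<in> borel_measurable borel"
    unfolding D_def ndens_def by measurable
  have D_int: "integrable lborel D"
  proof (rule Bochner_Integration.integrable_bound[OF bound_int])
    have "L \<ge> 0"
      using assms by (simp add: L_def)
    then show "AE x in lborel. norm (D x) \<le> norm (L / s * \<bar>x * f x\<bar>)"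
      using D_le assms(2) by (simp add: abs_mult)
  qed simp
  have "(\<integral>x. ndens \<sigma> ((x + u) / s) * f x \<partial>lborel) - ndens \<sigma> (u / s) * (\<integral>x. f x \<partial>lborel)
      = (\<integral>x. D x \<partial>lborel)"
  proof -
    have "(\<lambda>x. ndens \<sigma> ((x + u) / s) * f x) = (\<lambda>x. D x + ndens \<sigma> (u / s) * f x)"
      by (auto simp: D_def algebra_simps)
    then show ?thesis using D_int f_int by simp
  qed
  also have "\<bar>\<dots>\<bar> \<le> (\<integral>x. L / s * \<bar>x * f x\<bar> \<partial>lborel)"
    using D_int bound_int D_le by (rule integral_abs_bound_integral)
  finally show ?thesis by (simp add: L_def)
qed

lemma uniformly_eventually_abs_less:
  fixes a :: "nat \<Rightarrow> 'b \<Rightarrow> real"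
  assumes "b \<longlonglongrightarrow> 0" and "\<And>N u. N \<ge> 1 \<Longrightarrow> \<bar>a N u\<bar> \<le> b N"
  shows "\<forall>e>0. \<forall>\<^sub>F N in sequentially. \<forall>u. \<bar>a N u\<bar> < e"
proof (intro allI impI)
  fix e :: real assume "e > 0"
  with assms(1) have "\<forall>\<^sub>F N in sequentially. b N < e"
    by (rule order_tendstoD)
  then show "\<forall>\<^sub>F N in sequentially. \<forall>u. \<bar>a N u\<bar> < e"
    using eventually_ge_at_top[of 1]
    by eventually_elim (meson assms(2) le_less_trans)
qed

theorem proposition5p1:
  fixes M :: "'a measure" and X :: "nat \<Rightarrow> 'a \<Rightarrow> real" and \<sigma> :: real
    and F :: "(real \<Rightarrow> real) set" and nrm :: "(real \<Rightarrow> real) \<Rightarrow> real"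
    and f :: "real \<Rightarrow> real"
  assumes "prob_space M"
    and rv: "\<And>n. X n \<in> borel_measurable M"
    and sigma_pos: "\<sigma> > 0"
    \<comment> \<open>F is a linear space of functions, closed under translations\<close>
    and F_zero: "(\<lambda>x. 0) \<in> F"
    and F_add: "\<And>g h. g \<in> F \<Longrightarrow> h \<in> F \<Longrightarrow> (\<lambda>x. g x + h x) \<in> F"
    and F_scale: "\<And>g c. g \<in> F \<Longrightarrow> (\<lambda>x. c * g x) \<in> F"
    and F_transl: "\<And>g u. g \<in> F \<Longrightarrow> (\<lambda>x. g (x - u)) \<in> F"
    \<comment> \<open>nrm is a translation-invariant norm on F\<close>
    and nrm_nonneg: "\<And>g. g \<in> F \<Longrightarrow> nrm g \<ge> 0"
    and nrm_scale: "\<And>g c. g \<in> F \<Longrightarrow> nrm (\<lambda>x. c * g x) = \<bar>c\<bar> * nrm g"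
    and nrm_triangle: "\<And>g h. g \<in> F \<Longrightarrow> h \<in> F \<Longrightarrow> nrm (\<lambda>x. g x + h x) \<le> nrm g + nrm h"
    and nrm_transl: "\<And>g u. g \<in> F \<Longrightarrow> nrm (\<lambda>x. g (x - u)) = nrm g"
    \<comment> \<open>weak global Edgeworth expansion of order 0, P_0 = 1, A = 0, uniform o-term\<close>
    and edgeworth: "\<exists>\<epsilon> :: nat \<Rightarrow> real. \<epsilon> \<longlonglongrightarrow> 0 \<and>
        (\<forall>N\<ge>1. \<forall>g\<in>F.
          \<bar>(\<integral>\<omega>. g (psum X N \<omega>) \<partial>M) - (\<integral>z. ndens \<sigma> z * g (z * sqrt (real N)) \<partial>lborel)\<bar>
            \<le> nrm g * \<epsilon> N / sqrt (real N))"
    and fF: "f \<in> F"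
    and f_int: "integrable lborel f"
    and xf_int: "integrable lborel (\<lambda>x. x * f x)"
  shows "\<forall>e>0. \<forall>\<^sub>F N in sequentially. \<forall>u::real.
           \<bar>sqrt (real N) * (\<integral>\<omega>. f (psum X N \<omega> - u) \<partial>M)
             - 1 / sqrt (2 * pi * \<sigma>\<^sup>2) * exp (- u\<^sup>2 / (2 * real N * \<sigma>\<^sup>2))
               * (\<integral>x. f x \<partial>lborel)\<bar> < e"
proof -
  obtain \<epsilon> :: "nat \<Rightarrow> real" where \<epsilon>: "\<epsilon> \<longlonglongrightarrow> 0" and expansion: "\<And>N g. N \<ge> 1 \<Longrightarrow> g \<in> F \<Longrightarrow>
      \<bar>(\<integral>\<omega>. g (psum X N \<omega>) \<partial>M) - (\<integral>z. ndens \<sigma> z * g (z * sqrt (real N)) \<partial>lborel)\<bar>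
        \<le> nrm g * \<epsilon> N / sqrt (real N)"
    using edgeworth by blast
  define C where "C = 1 / sqrt (2 * pi * \<sigma>\<^sup>2) / \<sigma> * (\<integral>x. \<bar>x * f x\<bar> \<partial>lborel)"
  have "\<bar>sqrt (real N) * (\<integral>\<omega>. f (psum X N \<omega> - u) \<partial>M)
          - 1 / sqrt (2 * pi * \<sigma>\<^sup>2) * exp (- u\<^sup>2 / (2 * real N * \<sigma>\<^sup>2)) * (\<integral>x. f x \<partial>lborel)\<bar>
        \<le> nrm f * \<bar>\<epsilon> N\<bar> + C / sqrt (real N)" if N: "N \<ge> 1" for N u
  proof -
    define s where "s = sqrt (real N)"
    define E where "E = (\<integral>\<omega>. f (psum X N \<omega> - u) \<partial>M)"
    define A where "A = (\<integral>z. ndens \<sigma> z * f (z * s - u) \<partial>lborel)"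
    have s: "s > 0"
      using N by (simp add: s_def)
    have "\<bar>E - A\<bar> \<le> nrm f * \<epsilon> N / s"
      using expansion[OF N F_transl[OF fF]] nrm_transl[OF fF] by (simp add: E_def A_def s_def)
    then have "\<bar>s * (E - A)\<bar> \<le> nrm f * \<bar>\<epsilon> N\<bar>"
      using s mult_left_mono[OF abs_ge_self nrm_nonneg[OF fF], of "\<epsilon> N"]
      by (simp add: abs_mult pos_le_divide_eq mult.commute)
    moreover have "\<bar>s * A - ndens \<sigma> (u / s) * (\<integral>x. f x \<partial>lborel)\<bar> \<le> C / s"
      using integral_ndens_dilate_approx[OF sigma_pos s f_int xf_int]
      by (simp add: A_def integral_ndens_rescale[OF s] C_def)
    ultimately have "\<bar>s * E - ndens \<sigma> (u / s) * (\<integral>x. f x \<partial>lborel)\<bar> \<le> nrm f * \<bar>\<epsilon> N\<bar> + C / s"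
      by (simp add: right_diff_distrib abs_le_iff)
    then show ?thesis
      using ndens_at_scaled_point[of N \<sigma> u] N by (simp add: E_def s_def)
  qed
  moreover have "(\<lambda>N. nrm f * \<bar>\<epsilon> N\<bar> + C / sqrt (real N)) \<longlonglongrightarrow> 0"
    using \<epsilon> by (intro tendsto_add_zero tendsto_mult_right_zero tendsto_rabs_zero tendsto_divide_0[OF tendsto_const]
        filterlim_at_top_imp_at_infinity filterlim_compose[OF sqrt_at_top filterlim_real_sequentially])
  ultimately show ?thesis
    by (intro uniformly_eventually_abs_less) auto
qed

end
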